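(* Let $([n],\mathcal{I})$ be a downward-closed set system on the set of bidders $[n]$ that is not a matroid. Then MyerOPT is not RMMB: there exist distributions $F_1,\dots,F_n$, a partition $[n]=G\cup R$ with $G\neq\emptyset$, and fixed red bids $b_i\in V_i$ ($i\in R$) such that $$\mathbb{E}_{\vec b_G\sim\prod_{i\in G}F_i}\big[\mathrm{Rev}(\mathrm{MyerOPT}_{[n]}(\vec b_G,\vec b_R))\big]\;<\;\mathbb{E}_{\vec b_G\sim\prod_{i\in G}F_i}\big[\mathrm{Rev}(\mathrm{MyerOPT}_G(\vec b_G))\big].$$
   Context: Single-parameter environment: bidders $[n]$; a feasibility constraint $\mathcal{I}\subseteq 2^{[n]}$ with $\emptyset\in\mathcal{I}$ that is downward-closed (if $B\in\mathcal{I}$ and $A\subseteq B$ then $A\in\mathcal{I}$). A matroid is such a system that also satisfies the exchange axiom: if $A,B\in\mathcal{I}$ and $|A|>|B|$ then there is $x\in A\setminus B$ with $B\cup\{x\}\in\mathcal{I}$. Each bidder $i$ has a specified value distribution $F_i$ on $\mathbb{R}_{\ge0}$ with support $V_i$. The (ironed) virtual value function $\phi_i$ of $F_i$ is defined in quantile space: let $v_i(q)=\min\{v: F_i(v)\ge 1-q\}$ for $q\in[0,1]$, $R_i(q)=q\,v_i(q)$, $\overline{R_i}$ the least concave majorant of $R_i$ on $[0,1]$, and $\phi_i(v_i(q))=\overline{R_i}'(q)$ (for a regular distribution with density $f_i$ this equals $z-\frac{1-F_i(z)}{f_i(z)}$ at $z=v_i(q)$; for a point mass at $c$ it is constantly $c$).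 For $S\subseteq[n]$ and bids $b_i\in V_i$ ($i\in S$), the mechanism $\mathrm{MyerOPT}_S$ works as follows: discard bidders $i\in S$ with $\phi_i(b_i)<0$; among the sets $T\in\mathcal{I}$ with $T$ contained in the remaining bidders, select a set of winners maximizing $\sum_{i\in T}\phi_i(b_i)$ (ties broken by a fixed deterministic rule); each winner $i$ pays its critical bid, i.e. the infimum of those $z\in V_i$ such that $i$ would still be a winner if it bid $z$ with all other bids unchanged; losers pay $0$. $\mathrm{Rev}$ denotes the sum of the payments. $\mathrm{MyerOPT}$ (or $\mathrm{MyerOPT}_{[n]}$) is this mechanism run on all bidders with all specified distributions. The mechanism is RMMB (Revenue Monotone under Misspecified Bidders) for the feasibility constraint if for all distributions, all partitions $[n]=G\cup R$ with $G\ne\emptyset$ ("green" and "red" bidders), and all fixed red bids $b_i\in V_i$ ($i\in R$), the expected revenue (over $\vec b_G\sim\prod_{i\in G}F_i$) of $\mathrm{MyerOPT}_{[n]}$ on $(\vec b_G,\vec b_R)$ is at least the expected revenue of $\mathrm{MyerOPT}_G$ on $\vec b_G$. *)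

theory Defs
  imports "HOL-Probability.Probability"
begin

definition downward_closed :: "nat set \<Rightarrow> nat set set \<Rightarrow> bool" where
  "downward_closed N I \<longleftrightarrow>
     I \<subseteq> Pow N \<and> {} \<in> I \<and> (\<forall>B\<in>I. \<forall>A. A \<subseteq> B \<longrightarrow> A \<in> I)"

definition is_matroid :: "nat set \<Rightarrow> nat set set \<Rightarrow> bool" where
  "is_matroid N I \<longleftrightarrow> downward_closed N I \<and>
     (\<forall>A\<in>I. \<forall>B\<in>I. card A > card B \<longrightarrow> (\<exists>x\<in>A - B. insert x B \<in> I))"

definition valid_dist :: "real measure \<Rightarrow> bool" where
  "valid_dist F \<longleftrightarrow> prob_space F \<and> sets F = sets borel \<and> emeasure F {..<0} = 0"

definition cdf_of :: "real measure \<Rightarrow> real \<Rightarrow> real" where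
  "cdf_of F v = measure F {..v}"

definition dist_support :: "real measure \<Rightarrow> real set" where
  "dist_support F = {x. \<forall>e>0. emeasure F {x - e<..<x + e} > 0}"

definition quantile_val :: "real measure \<Rightarrow> real \<Rightarrow> real" where
  "quantile_val F q = (LEAST v. 0 \<le> v \<and> 1 - q \<le> cdf_of F v)"

definition rev_curve :: "real measure \<Rightarrow> real \<Rightarrow> real" where
  "rev_curve F q = q * quantile_val F q"

definition ironed_rev :: "real measure \<Rightarrow> real \<Rightarrow> real" where
  "ironed_rev F q = (INF g \<in> {g. concave_on {0..1} g \<and> (\<forall>x\<in>{0..1}. rev_curve F x \<le> g x)}. g q)"

definition virtual_value :: "real measure \<Rightarrow> real \<Rightarrow> real" where
  "virtual_value F v = (THE d. \<exists>q\<in>{0<..<1}. quantile_val F q = v \<and>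
                             (ironed_rev F has_real_derivative d) (at q))"

text \<open>\<open>tb\<close> is the fixed deterministic tie-breaking rule: it selects one set
  among the (nonempty) set of optimal winner sets.\<close>
definition myer_winners ::
  "nat set set \<Rightarrow> (nat \<Rightarrow> real measure) \<Rightarrow> (nat set set \<Rightarrow> nat set) \<Rightarrow> nat set
     \<Rightarrow> (nat \<Rightarrow> real) \<Rightarrow> nat set" where
  "myer_winners I F tb S b =
     (let E = {i \<in> S. 0 \<le> virtual_value (F i) (b i)};
          C = {T \<in> I. T \<subseteq> E};
          M = {T \<in> C. \<forall>T'\<in>C. (\<Sum>i\<in>T'. virtual_value (F i) (b i)) \<le> (\<Sum>i\<in>T. virtual_value (F i) (b i))}
      in tb M)"

definition myer_payment ::
  "nat set set \<Rightarrow> (nat \<Rightarrow> real measure) \<Rightarrow> (nat set set \<Rightarrow> nat set) \<Rightarrow> nat set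
     \<Rightarrow> (nat \<Rightarrow> real) \<Rightarrow> nat \<Rightarrow> real" where
  "myer_payment I F tb S b i =
     (if i \<in> myer_winners I F tb S b
      then Inf {z \<in> dist_support (F i). i \<in> myer_winners I F tb S (b(i := z))}
      else 0)"

definition myer_rev ::
  "nat set set \<Rightarrow> (nat \<Rightarrow> real measure) \<Rightarrow> (nat set set \<Rightarrow> nat set) \<Rightarrow> nat set
     \<Rightarrow> (nat \<Rightarrow> real) \<Rightarrow> real" where
  "myer_rev I F tb S b = (\<Sum>i\<in>S. myer_payment I F tb S b i)"

definition exp_rev_all ::
  "nat \<Rightarrow> nat set set \<Rightarrow> (nat \<Rightarrow> real measure) \<Rightarrow> (nat set set \<Rightarrow> nat set) \<Rightarrow> nat set
     \<Rightarrow> (nat \<Rightarrow> real) \<Rightarrow> ennreal" where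
  "exp_rev_all n I F tb G bR =
     (\<integral>\<^sup>+ bG. ennreal (myer_rev I F tb {1..n} (\<lambda>i. if i \<in> G then bG i else bR i)) \<partial>(PiM G F))"

definition exp_rev_green ::
  "nat set set \<Rightarrow> (nat \<Rightarrow> real measure) \<Rightarrow> (nat set set \<Rightarrow> nat set) \<Rightarrow> nat set \<Rightarrow> ennreal" where
  "exp_rev_green I F tb G = (\<integral>\<^sup>+ bG. ennreal (myer_rev I F tb G bG) \<partial>(PiM G F))"

end

theory Submission
  imports Defs
begin

text \<open>A downward-closed system that is not a matroid contains sets \<open>C \<union> {b}\<close> and
  \<open>C \<union> {x, y}\<close> in \<open>\<I>\<close> such that neither \<open>C \<union> {b, x}\<close> nor \<open>C \<union> {b, y}\<close> is in \<open>\<I>\<close>.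
  Let \<open>x\<close> and \<open>y\<close> be red, with value 8 with probability 1/4 and 3 otherwise (virtual
  values 8 and 4/3), and let every other bidder be green with a point mass: 7 on
  \<open>C \<union> {b}\<close> and 0 elsewhere. Alone, the green bidders sell \<open>C \<union> {b}\<close> for \<open>7(|C| + 1)\<close>.
  With both red bids at 8, every optimal set contains \<open>x\<close> and \<open>y\<close> and hence at most
  \<open>|C|\<close> of the bidders of value 7, while each red winner would still win at bid 3 and so
  pays at most 3: the revenue is at most \<open>7|C| + 6\<close>.\<close>

section \<open>The obstruction in a non-matroid\<close>

text \<open>Induction on \<open>|B - A|\<close>: drop some \<open>b \<in> B - A\<close>; if two elements of \<open>A - B\<close> can be
  added to \<open>B - {b}\<close> one after the other, \<open>C = B - {b}\<close> is the obstruction, otherwise the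
  exchange axiom already fails for \<open>A\<close> and a set closer to \<open>A\<close>.\<close>
lemma exchange_failure_obstruction:
  assumes dc: "downward_closed N I" and fin: "finite N"
    and "A \<in> I" "B \<in> I" "card B < card A" "\<forall>z\<in>A - B. insert z B \<notin> I"
  shows "\<exists>C b x y. b \<notin> C \<and> x \<notin> insert b C \<and> y \<notin> insert b C \<and> x \<noteq> y \<and>
           insert b C \<in> I \<and> insert x (insert y C) \<in> I \<and>
           insert x (insert b C) \<notin> I \<and> insert y (insert b C) \<notin> I"
  using assms(4-6)
proof (induction "card (B - A)" arbitrary: B rule: less_induct)
  case (less B)
  have subset: "\<And>T U. T \<in> I \<Longrightarrow> U \<subseteq> T \<Longrightarrow> U \<in> I"
    using dc unfolding downward_closed_def by blast
  have fB: "finite B"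
    using dc fin less.prems(1) unfolding downward_closed_def by (meson PowD finite_subset subsetD)
  show ?case
  proof (cases "B \<subseteq> A")
    case True
    then have "A - B \<noteq> {}" using less.prems(2) card_mono[OF fB] by fastforce
    then obtain z where "z \<in> A - B" by auto
    with True subset[OF \<open>A \<in> I\<close>, of "insert z B"] less.prems(3) show ?thesis by auto
  next
    case False
    then obtain b where b: "b \<in> B" "b \<notin> A" by auto
    define B' where "B' = B - {b}"
    have B': "B' \<in> I" "card B' < card B" "B = insert b B'" "b \<notin> B'"
      using subset[OF less.prems(1)] card_Diff1_less[OF fB b(1)] b(1) by (auto simp: B'_def)
    have shrink: "card (B - A - {b}) < card (B - A)"
      using b fB by (intro card_Diff1_less) auto
    have closer: "card (B' - A) < card (B - A)" "\<And>z. z \<in> A \<Longrightarrow> card (insert z B' - A) < card (B - A)"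
    proof -
      have "B' - A = B - A - {b}" "\<And>z. z \<in> A \<Longrightarrow> insert z B' - A = B - A - {b}"
        by (auto simp: B'_def)
      then show "card (B' - A) < card (B - A)" "\<And>z. z \<in> A \<Longrightarrow> card (insert z B' - A) < card (B - A)"
        using shrink by simp_all
    qed
    show ?thesis
    proof (cases "\<exists>x\<in>A - B. insert x B' \<in> I")
      case False
      then have "card (B' - A) < card (B - A)" "\<forall>z\<in>A - B'. insert z B' \<notin> I"
        using closer(1) b B' by auto
      then show ?thesis using less.hyps[OF _ B'(1)] less.prems(2) B'(2) by auto
    next
      case True
      then obtain x where x: "x \<in> A - B" "insert x B' \<in> I" by auto
      have card_xB': "card (insert x B') = card B"
        using x(1) B'(3,4) fB by (simp add: card_insert_if)
      show ?thesis
      proof (cases "\<exists>y\<in>A - insert x B'. insert y (insert x B') \<in> I")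
        case False
        then show ?thesis
          using less.hyps[OF closer(2) x(2)] x(1) card_xB' less.prems(2) by auto
      next
        case True
        then obtain y where y: "y \<in> A - insert x B'" "insert y (insert x B') \<in> I" by auto
        have "y \<notin> B" using y(1) b(2) B'(3) by auto
        then show ?thesis
          using x y B' less.prems(1,3)
          by (intro exI[of _ B'] exI[of _ b] exI[of _ x] exI[of _ y]) (auto simp: insert_commute)
      qed
    qed
  qed
qed

lemma non_matroid_obstruction:
  assumes "downward_closed N I" "finite N" "\<not> is_matroid N I"
  obtains C b x y where "b \<notin> C" "x \<notin> insert b C" "y \<notin> insert b C" "x \<noteq> y"
    "insert b C \<in> I" "insert x (insert y C) \<in> I"
    "insert x (insert b C) \<notin> I" "insert y (insert b C) \<notin> I"
proof -
  from assms obtain A B where "A \<in> I" "B \<in> I" "card B < card A" "\<forall>z\<in>A - B. insert z B \<notin> I"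
    unfolding is_matroid_def by auto
  then show thesis using exchange_failure_obstruction[OF assms(1,2)] that by blast
qed

section \<open>Ironed revenue curves and virtual values\<close>

lemma ironed_rev_eqI:
  assumes "concave_on {0..1} g" "\<forall>q\<in>{0..1}. rev_curve F q \<le> g q"
    and "\<And>h. concave_on {0..1} h \<Longrightarrow> \<forall>q\<in>{0..1}. rev_curve F q \<le> h q \<Longrightarrow> g q \<le> h q"
  shows "ironed_rev F q = g q"
proof -
  let ?M = "{h. concave_on {0..1} h \<and> (\<forall>q\<in>{0..1}. rev_curve F q \<le> h q)}"
  have "g \<in> ?M" using assms(1,2) by simp
  moreover have "bdd_below ((\<lambda>h. h q) ` ?M)" using assms(3) by (intro bdd_belowI2[of _ "g q"]) auto
  ultimately show ?thesis
    unfolding ironed_rev_def using assms(3) by (intro antisym cINF_lower cINF_greatest) auto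
qed

lemma quantile_val_one: "quantile_val F 1 = 0"
  unfolding quantile_val_def cdf_of_def by (rule Least_equality) auto

text \<open>The quantiles \<open>q\<close> in \<open>S\<close> have to be the only ones with value \<open>v\<close> at which the ironed
  revenue curve is differentiable, since \<open>virtual_value\<close> is a definite description.\<close>
lemma virtual_value_eqI:
  assumes S: "open S" "S \<subseteq> {0<..<1}" and q0: "q0 \<in> S" "quantile_val F q0 = v"
    and affine: "\<And>q. q \<in> S \<Longrightarrow> ironed_rev F q = d * q + e"
    and only_S: "\<And>q d'. q \<in> {0<..<1} \<Longrightarrow> quantile_val F q = v \<Longrightarrow>
                   (ironed_rev F has_real_derivative d') (at q) \<Longrightarrow> q \<in> S"
  shows "virtual_value F v = d"
proof -
  have deriv: "(ironed_rev F has_real_derivative d) (at q)" if "q \<in> S" for q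
    by (rule has_field_derivative_transform_within_open[of "\<lambda>q. d * q + e" _ _ S])
      (auto intro!: derivative_eq_intros simp: affine S(1) that)
  show ?thesis
    unfolding virtual_value_def
  proof (rule the_equality)
    show "\<exists>q\<in>{0<..<1}. quantile_val F q = v \<and> (ironed_rev F has_real_derivative d) (at q)"
      using q0 S(2) deriv by blast
  next
    fix d' assume "\<exists>q\<in>{0<..<1}. quantile_val F q = v \<and> (ironed_rev F has_real_derivative d') (at q)"
    then show "d' = d" using only_S deriv DERIV_unique by blast
  qed
qed

lemma valid_dist_return: "0 \<le> c \<Longrightarrow> valid_dist (return borel c)"
  unfolding valid_dist_def by (auto simp: prob_space_return)

lemma dist_support_return: "dist_support (return borel c) = {c}"
proof -
  have "x = c" if "\<forall>e>0. 0 < emeasure (return borel c) {x - e<..<x + e}" for x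
  proof (rule ccontr)
    assume "x \<noteq> c"
    then have "0 < \<bar>x - c\<bar>" by simp
    with that have "0 < emeasure (return borel c) {x - \<bar>x - c\<bar><..<x + \<bar>x - c\<bar>}" by blast
    then show False by (auto simp: emeasure_return split: split_indicator abs_split)
  qed
  then show ?thesis unfolding dist_support_def by (auto simp: emeasure_return)
qed

lemma quantile_val_return: "0 \<le> c \<Longrightarrow> 0 \<le> q \<Longrightarrow> q < 1 \<Longrightarrow> quantile_val (return borel c) q = c"
  unfolding quantile_val_def cdf_of_def
  by (rule Least_equality) (auto simp: measure_return indicator_def of_bool_def split: if_splits)

lemma ironed_rev_return:
  assumes "0 \<le> c" "0 \<le> q" "q < 1"
  shows "ironed_rev (return borel c) q = c * q"
proof (rule ironed_rev_eqI)
  show "concave_on {0..1} ((*) c)" by (simp add: concave_on_iff algebra_simps)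
  show "\<forall>x\<in>{0..1}. rev_curve (return borel c) x \<le> c * x"
    using assms(1) by (auto simp: rev_curve_def quantile_val_return quantile_val_one less_eq_real_def)
  show "c * q \<le> h q" if "\<forall>x\<in>{0..1}. rev_curve (return borel c) x \<le> h x" for h
    using that[rule_format, of q] assms by (simp add: rev_curve_def quantile_val_return mult.commute)
qed

lemma virtual_value_return: "0 \<le> c \<Longrightarrow> virtual_value (return borel c) c = c"
  by (rule virtual_value_eqI[of "{0<..<1}" "1/2" _ _ _ 0]) (auto simp: quantile_val_return ironed_rev_return)

section \<open>The red distribution\<close>

definition red_dist :: "real measure" where
  "red_dist = distr (measure_pmf (bernoulli_pmf (1/4))) borel (\<lambda>h. if h then 8 else 3)"

lemma measure_red_dist:
  assumes "A \<in> sets borel"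
  shows "measure red_dist A = (if 8 \<in> A then 1/4 else 0) + (if 3 \<in> A then 3/4 else 0)"
proof -
  have "measure red_dist A = sum (pmf (bernoulli_pmf (1/4))) ((\<lambda>h. if h then 8 else 3 :: real) -` A)"
    unfolding red_dist_def using assms by (simp add: measure_distr measure_measure_pmf_finite)
  also have "(\<lambda>h. if h then 8 else 3 :: real) -` A =
      (if 8 \<in> A then {True} else {}) \<union> (if 3 \<in> A then {False} else {})"
    by (auto split: if_splits)
  finally show ?thesis by (auto simp: sum.union_disjoint)
qed

lemma prob_space_red_dist: "prob_space red_dist"
  unfolding red_dist_def by (auto intro: prob_space.prob_space_distr prob_space_measure_pmf)

lemma sets_red_dist: "sets red_dist = sets borel"
  unfolding red_dist_def by simp

lemma emeasure_red_dist:
  assumes "A \<in> sets borel"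
  shows "emeasure red_dist A = ennreal ((if 8 \<in> A then 1/4 else 0) + (if 3 \<in> A then 3/4 else 0))"
proof -
  interpret prob_space red_dist by (rule prob_space_red_dist)
  show ?thesis using assms by (simp add: emeasure_eq_measure sets_red_dist measure_red_dist)
qed

lemma valid_dist_red_dist: "valid_dist red_dist"
  unfolding valid_dist_def using prob_space_red_dist sets_red_dist by (simp add: emeasure_red_dist)

lemma dist_support_red_dist: "3 \<in> dist_support red_dist" "8 \<in> dist_support red_dist"
  unfolding dist_support_def by (auto simp: emeasure_red_dist intro: add_pos_nonneg)

lemma dist_support_red_dist_nonneg: "dist_support red_dist \<subseteq> {0..}"
proof
  fix v assume "v \<in> dist_support red_dist"
  then have "0 < emeasure red_dist {v - e<..<v + e}" if "0 < e" for e
    using that unfolding dist_support_def by blast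
  from this[of "- v"] show "v \<in> {0..}" by (cases "0 \<le> v") (auto simp: emeasure_red_dist)
qed

lemma quantile_val_red_dist:
  "0 \<le> q \<Longrightarrow> q < 1/4 \<Longrightarrow> quantile_val red_dist q = 8"
  "1/4 \<le> q \<Longrightarrow> q < 1 \<Longrightarrow> quantile_val red_dist q = 3"
  unfolding quantile_val_def cdf_of_def by (rule Least_equality; auto simp: measure_red_dist split: if_splits)+

definition red_ironed_rev :: "real \<Rightarrow> real" where
  "red_ironed_rev q = min (8 * q) ((4 * q + 5) / 3)"

lemma red_ironed_rev_concave: "concave_on {0..1} red_ironed_rev"
  unfolding concave_on_iff
proof (intro conjI ballI allI impI)
  show "convex {0..1::real}" by (rule convex_real_interval)
  fix p q u v :: real assume "0 \<le> u" "0 \<le> v" "u + v = 1"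
  have "red_ironed_rev z \<le> 8 * z" "red_ironed_rev z \<le> (4 * z + 5) / 3" for z
    unfolding red_ironed_rev_def by (rule min.cobounded1 min.cobounded2)+
  then have "u * red_ironed_rev p + v * red_ironed_rev q \<le> u * (8 * p) + v * (8 * q)"
    "u * red_ironed_rev p + v * red_ironed_rev q \<le> u * ((4 * p + 5) / 3) + v * ((4 * q + 5) / 3)"
    using \<open>0 \<le> u\<close> \<open>0 \<le> v\<close> by (intro add_mono mult_left_mono; simp)+
  moreover have "u * (8 * p) + v * (8 * q) = 8 * (u *\<^sub>R p + v *\<^sub>R q)"
    "u * ((4 * p + 5) / 3) + v * ((4 * q + 5) / 3) = (4 * (u *\<^sub>R p + v *\<^sub>R q) + 5) / 3"
    using \<open>u + v = 1\<close> by (simp_all add: field_simps)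
  ultimately show "u * red_ironed_rev p + v * red_ironed_rev q \<le> red_ironed_rev (u *\<^sub>R p + v *\<^sub>R q)"
    unfolding red_ironed_rev_def by simp
qed

lemma rev_curve_red_dist_le: "\<forall>q\<in>{0..1}. rev_curve red_dist q \<le> red_ironed_rev q"
proof
  fix q :: real assume q: "q \<in> {0..1}"
  consider "q < 1/4" | "1/4 \<le> q" "q < 1" | "q = 1" using q by force
  then show "rev_curve red_dist q \<le> red_ironed_rev q"
    using q by cases (simp_all add: rev_curve_def quantile_val_red_dist quantile_val_one red_ironed_rev_def)
qed

text \<open>The revenue curve is \<open>8 q\<close> on \<open>[0, 1/4)\<close> and \<open>3 q\<close> on \<open>[1/4, 1)\<close>, with value 0 at
  \<open>q = 1\<close>; a concave majorant lies above each chord between points \<open>1/4 - t\<close> and \<open>1 - t\<close>,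
  and these chords tend to the line through \<open>(1/4, 2)\<close> and \<open>(1, 3)\<close> as \<open>t \<rightarrow> 0\<close>.\<close>
lemma red_ironed_rev_le_majorant:
  assumes h: "concave_on {0..1} h" "\<forall>p\<in>{0..1}. rev_curve red_dist p \<le> h p"
    and q: "0 \<le> q" "q < 1"
  shows "red_ironed_rev q \<le> h q"
proof (cases "q < 1/4")
  case True
  then show ?thesis
    using h(2)[rule_format, of q] q by (simp add: rev_curve_def quantile_val_red_dist red_ironed_rev_def)
next
  case False
  define chord where "chord t = (4/3) * ((1 - t - q) * (8 * (1/4 - t)) + (q - 1/4 + t) * (3 * (1 - t)))"
    for t :: real
  have "chord t \<le> h q" if t: "0 < t" "t < min (1/4) (1 - q)" for t
  proof -
    define u where "u = (q - (1/4 - t)) / (3/4)"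
    have u: "0 \<le> u" "u \<le> 1" "(1 - u) *\<^sub>R (1/4 - t) + u *\<^sub>R (1 - t) = q"
      using t False q unfolding u_def by (auto simp: field_simps)
    have ends: "1/4 - t \<in> {0..1}" "1 - t \<in> {0..1}" using t q by auto
    have "rev_curve red_dist (1/4 - t) = 8 * (1/4 - t)" "rev_curve red_dist (1 - t) = 3 * (1 - t)"
      using t q by (simp_all add: rev_curve_def quantile_val_red_dist mult.commute)
    then have "8 * (1/4 - t) \<le> h (1/4 - t)" "3 * (1 - t) \<le> h (1 - t)"
      using h(2)[rule_format, OF ends(1)] h(2)[rule_format, OF ends(2)] by simp_all
    then have "(1 - u) * (8 * (1/4 - t)) + u * (3 * (1 - t)) \<le> (1 - u) * h (1/4 - t) + u * h (1 - t)"
      using u by (intro add_mono mult_left_mono) auto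
    also have "\<dots> \<le> h q"
      using concave_onD[OF h(1) u(1,2) ends] u(3) by simp
    finally show ?thesis unfolding chord_def u_def by (simp add: field_simps)
  qed
  then have "eventually (\<lambda>t. chord t \<le> h q) (at_right 0)"
    unfolding eventually_at_right_field using q by (intro exI[of _ "min (1/4) (1 - q)"]) auto
  moreover have "(chord \<longlongrightarrow> chord 0) (at_right 0)" unfolding chord_def by (intro tendsto_intros)
  ultimately have "chord 0 \<le> h q"
    by (intro tendsto_le[OF trivial_limit_at_right_real tendsto_const])
  moreover have "chord 0 = (4 * q + 5) / 3" unfolding chord_def by (simp add: field_simps)
  ultimately show ?thesis unfolding red_ironed_rev_def by (metis min.coboundedI2)
qed

lemma ironed_rev_red_dist: "0 \<le> q \<Longrightarrow> q < 1 \<Longrightarrow> ironed_rev red_dist q = red_ironed_rev q"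
  by (rule ironed_rev_eqI[OF red_ironed_rev_concave rev_curve_red_dist_le red_ironed_rev_le_majorant])

lemma ironed_rev_red_dist_not_differentiable:
  "\<not> (ironed_rev red_dist has_real_derivative d) (at (1/4))"
proof
  let ?slope = "\<lambda>p. (ironed_rev red_dist p - ironed_rev red_dist (1/4)) / (p - 1/4)"
  assume "(ironed_rev red_dist has_real_derivative d) (at (1/4))"
  then have "(?slope \<longlongrightarrow> d) (at_left (1/4))" "(?slope \<longlongrightarrow> d) (at_right (1/4))"
    by (simp_all add: has_field_derivative_iff filterlim_at_split)
  moreover have "eventually (\<lambda>p. 8 = ?slope p) (at_left (1/4))"
    unfolding eventually_at_left_field
    by (intro exI[of _ 0]) (auto simp: ironed_rev_red_dist red_ironed_rev_def field_simps)
  then have "(?slope \<longlongrightarrow> 8) (at_left (1/4))" by (rule Lim_transform_eventually[OF tendsto_const])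
  moreover have "eventually (\<lambda>p. 4/3 = ?slope p) (at_right (1/4))"
    unfolding eventually_at_right_field
    by (intro exI[of _ 1]) (auto simp: ironed_rev_red_dist red_ironed_rev_def field_simps)
  then have "(?slope \<longlongrightarrow> 4/3) (at_right (1/4))" by (rule Lim_transform_eventually[OF tendsto_const])
  ultimately have "d = 8" "d = 4/3"
    using tendsto_unique[OF trivial_limit_at_left_real] tendsto_unique[OF trivial_limit_at_right_real]
    by blast+
  then show False by simp
qed

lemma virtual_value_red_dist: "virtual_value red_dist 8 = 8" "virtual_value red_dist 3 = 4/3"
proof -
  show "virtual_value red_dist 8 = 8"
  proof (rule virtual_value_eqI[of "{0<..<1/4}" "1/8" _ _ _ 0])
    fix q assume "q \<in> {0<..<1::real}" "quantile_val red_dist q = 8"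
    then show "q \<in> {0<..<1/4}" using quantile_val_red_dist(2)[of q] by force
  qed (auto simp: quantile_val_red_dist ironed_rev_red_dist red_ironed_rev_def)
  show "virtual_value red_dist 3 = 4/3"
  proof (rule virtual_value_eqI[of "{1/4<..<1}" "1/2" _ _ _ "5/3"])
    fix q d' assume "q \<in> {0<..<1::real}" "quantile_val red_dist q = 3"
      "(ironed_rev red_dist has_real_derivative d') (at q)"
    then show "q \<in> {1/4<..<1}"
      using quantile_val_red_dist(1)[of q] ironed_rev_red_dist_not_differentiable[of d']
      by (cases q "1/4 :: real" rule: linorder_cases) auto
  qed (auto simp: quantile_val_red_dist ironed_rev_red_dist red_ironed_rev_def)
qed

lemma myer_winners_optimal:
  fixes F :: "nat \<Rightarrow> real measure" and S :: "nat set" and b :: "nat \<Rightarrow> real"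
  assumes "\<forall>X. X \<noteq> {} \<longrightarrow> tb X \<in> X" "finite I" "{} \<in> I"
  defines "E \<equiv> {i \<in> S. 0 \<le> virtual_value (F i) (b i)}"
  shows "myer_winners I F tb S b \<in> I" "myer_winners I F tb S b \<subseteq> E"
    "\<And>T. T \<in> I \<Longrightarrow> T \<subseteq> E \<Longrightarrow>
      (\<Sum>i\<in>T. virtual_value (F i) (b i)) \<le> (\<Sum>i\<in>myer_winners I F tb S b. virtual_value (F i) (b i))"
proof -
  let ?val = "\<lambda>T. \<Sum>i\<in>T. virtual_value (F i) (b i)"
  define Cand where "Cand = {T \<in> I. T \<subseteq> E}"
  define M where "M = {T \<in> Cand. \<forall>T'\<in>Cand. ?val T' \<le> ?val T}"
  have W: "myer_winners I F tb S b = tb M"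
    unfolding myer_winners_def Let_def E_def Cand_def M_def by simp
  have "finite Cand" "{} \<in> Cand" using assms(2,3) unfolding Cand_def by auto
  then have "Max (?val ` Cand) \<in> ?val ` Cand" by (intro Max_in) auto
  then obtain T where "T \<in> Cand" "?val T = Max (?val ` Cand)" by auto
  then have "T \<in> M" using \<open>finite Cand\<close> unfolding M_def by auto
  then have "tb M \<in> M" using assms(1) by auto
  then show "myer_winners I F tb S b \<in> I" "myer_winners I F tb S b \<subseteq> E"
    "\<And>T. T \<in> I \<Longrightarrow> T \<subseteq> E \<Longrightarrow> ?val T \<le> ?val (myer_winners I F tb S b)"
    unfolding W M_def Cand_def by auto
qed

lemma myer_payment_return:
  assumes "F i = return borel (b i)"
  shows "myer_payment I F tb S b i = (if i \<in> myer_winners I F tb S b then b i else 0)"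
proof (cases "i \<in> myer_winners I F tb S b")
  case True
  then have "{z \<in> dist_support (F i). i \<in> myer_winners I F tb S (b(i := z))} = {b i}"
    using assms by (auto simp: dist_support_return)
  then show ?thesis using True by (simp add: myer_payment_def)
qed (simp add: myer_payment_def)

lemma myer_payment_le:
  assumes "dist_support (F i) \<subseteq> {0..}" "z \<in> dist_support (F i)"
    and "i \<in> myer_winners I F tb S (b(i := z))"
  shows "myer_payment I F tb S b i \<le> z"
proof -
  have "bdd_below {z \<in> dist_support (F i). i \<in> myer_winners I F tb S (b(i := z))}"
    using assms(1) by (intro bdd_belowI[of _ 0]) auto
  then show ?thesis using assms by (auto simp: myer_payment_def intro: cInf_lower)
qed

lemma nn_integral_PiM_return:
  fixes f :: "('a \<Rightarrow> real) \<Rightarrow> ennreal"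
  assumes fin: "finite G" and F: "\<And>i. i \<in> G \<Longrightarrow> F i = return borel (c i)"
  shows "(\<integral>\<^sup>+ v. f v \<partial>PiM G F) = f (restrict c G)"
proof -
  let ?M = "PiM G (\<lambda>_. borel :: real measure)" and ?c = "restrict c G"
  have "PiM G F = PiM G (\<lambda>i. return borel (c i))" by (rule PiM_cong) (use F in auto)
  also have "\<dots> = return ?M ?c" by (rule PiM_return[OF fin]) auto
  finally have P: "PiM G F = return ?M ?c" .
  have "{?c} = PiE G (\<lambda>i. {c i})"
    by (auto simp: PiE_def extensional_def fun_eq_iff Pi_def)
  also have "\<dots> \<in> sets ?M" by (rule sets_PiM_I_finite[OF fin]) auto
  finally have "{?c} \<in> sets ?M" .
  then have "AE v in return ?M ?c. f v = f ?c"
    by (intro AE_I'[of "space ?M - {?c}"]) (auto simp: null_sets_def)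
  then have "(\<integral>\<^sup>+ v. f v \<partial>return ?M ?c) = (\<integral>\<^sup>+ v. f ?c \<partial>return ?M ?c)"
    by (rule nn_integral_cong_AE)
  also have "\<dots> = f ?c"
    using prob_space.emeasure_space_1[OF prob_space_return[of ?c ?M]] by (simp add: space_PiM)
  finally show ?thesis unfolding P .
qed

section \<open>The counterexample\<close>

locale exchange_obstruction =
  fixes n :: nat and I :: "nat set set" and tb :: "nat set set \<Rightarrow> nat set"
    and C :: "nat set" and b x y :: nat
  assumes downward_closed: "downward_closed {1..n} I"
    and tb_choice: "\<forall>X. X \<noteq> {} \<longrightarrow> tb X \<in> X"
    and b_notin: "b \<notin> C" and x_notin: "x \<notin> insert b C" and y_notin: "y \<notin> insert b C"
    and x_neq_y: "x \<noteq> y"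
    and indep_bC: "insert b C \<in> I" and indep_xyC: "insert x (insert y C) \<in> I"
    and dep_xbC: "insert x (insert b C) \<notin> I" and dep_ybC: "insert y (insert b C) \<notin> I"
begin

definition heavy :: "nat set" where "heavy = insert b C"

definition green :: "nat set" where "green = {1..n} - {x, y}"

definition green_val :: "nat \<Rightarrow> real" where "green_val i = (if i \<in> heavy then 7 else 0)"

definition dists :: "nat \<Rightarrow> real measure" where
  "dists i = (if i = x \<or> i = y then red_dist else return borel (green_val i))"

definition bids :: "nat \<Rightarrow> real" where "bids i = (if i \<in> green then green_val i else 8)"

lemma indep_subset: "T \<in> I \<Longrightarrow> T \<subseteq> {1..n}"
  and empty_indep: "{} \<in> I"
  and indep_downward: "T \<in> I \<Longrightarrow> U \<subseteq> T \<Longrightarrow> U \<in> I"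
  using downward_closed unfolding downward_closed_def by blast+

lemma finite_indep: "finite I"
  using indep_subset by (meson finite_Pow_iff finite_atLeastAtMost finite_subset PowI subsetI)

lemma heavy_subset_green: "heavy \<subseteq> green"
  and finite_heavy: "finite heavy"
  and card_heavy: "card heavy = Suc (card C)"
  and red_in_range: "x \<in> {1..n}" "y \<in> {1..n}"
  using indep_subset[OF indep_bC] indep_subset[OF indep_xyC] finite_subset[of heavy "{1..n}"]
    x_notin y_notin b_notin
  by (auto simp: heavy_def green_def card_insert_if)

lemma finite_green: "finite green"
  by (simp add: green_def)

lemma green_dists: "i \<in> green \<Longrightarrow> dists i = return borel (green_val i)"
  unfolding dists_def green_def by auto

lemma red_dists: "dists x = red_dist" "dists y = red_dist"
  unfolding dists_def by auto

lemma sum_green_val: "finite T \<Longrightarrow> (\<Sum>i\<in>T. green_val i) = 7 * card (T \<inter> heavy)"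
  unfolding green_val_def by (simp add: sum.If_cases)

lemma card_heavy_le_if_red:
  assumes "T \<in> I" "x \<in> T \<or> y \<in> T"
  shows "card (T \<inter> heavy) \<le> card C"
proof -
  have "\<not> heavy \<subseteq> T"
  proof
    assume "heavy \<subseteq> T"
    then have "insert x heavy \<in> I \<or> insert y heavy \<in> I"
      using assms indep_downward[of T] by auto
    then show False using dep_xbC dep_ybC unfolding heavy_def by blast
  qed
  then have "card (T \<inter> heavy) < card heavy" using finite_heavy by (intro psubset_card_mono) auto
  then show ?thesis using card_heavy by simp
qed

lemma optimum_contains_red:
  fixes wx wy :: real
  defines "weight T \<equiv> 7 * card (T \<inter> heavy) + (if x \<in> T then wx else 0) + (if y \<in> T then wy else 0)"
  assumes W: "W \<in> I" "weight (insert x (insert y C)) \<le> weight W"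
    and w: "0 < wx" "0 < wy" "7 < wx + wy"
  shows "x \<in> W \<and> y \<in> W"
proof -
  have "insert x (insert y C) \<inter> heavy = C" using x_notin y_notin by (auto simp: heavy_def)
  then have "7 * card C + wx + wy \<le> weight W" using W(2) x_neq_y by (simp add: weight_def)
  moreover have "card (W \<inter> heavy) \<le> Suc (card C)"
    using card_mono[OF finite_heavy, of "W \<inter> heavy"] card_heavy by auto
  moreover have "x \<in> W \<or> y \<in> W \<Longrightarrow> card (W \<inter> heavy) \<le> card C"
    using card_heavy_le_if_red[OF W(1)] by blast
  ultimately show ?thesis using w unfolding weight_def by (auto split: if_splits)
qed

lemma sum_virtual_value:
  assumes bb: "\<forall>i\<in>green. bb i = green_val i" and T: "T \<subseteq> {1..n}"
  shows "(\<Sum>i\<in>T. virtual_value (dists i) (bb i)) =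
    7 * card (T \<inter> heavy) + (if x \<in> T then virtual_value red_dist (bb x) else 0)
      + (if y \<in> T then virtual_value red_dist (bb y) else 0)"
proof -
  have "virtual_value (dists i) (bb i) = green_val i
      + (if i = x then virtual_value red_dist (bb x) else 0)
      + (if i = y then virtual_value red_dist (bb y) else 0)" if "i \<in> T" for i
  proof -
    have "i \<in> green \<or> i = x \<or> i = y" using that T unfolding green_def by auto
    moreover have "green_val x = 0" "green_val y = 0"
      using x_notin y_notin by (auto simp: green_val_def heavy_def)
    ultimately show ?thesis
      using bb x_neq_y by (auto simp: green_dists red_dists virtual_value_return green_val_def)
  qed
  then show ?thesis
    using finite_subset[OF T] by (simp add: sum.distrib sum_green_val sum.delta)
qed

lemma red_bidders_win:
  assumes bb: "\<forall>i\<in>green. bb i = green_val i" "bb x \<in> {3, 8}" "bb y \<in> {3, 8}" "bb x = 8 \<or> bb y = 8"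
  shows "x \<in> myer_winners I dists tb {1..n} bb \<and> y \<in> myer_winners I dists tb {1..n} bb"
proof -
  let ?W = "myer_winners I dists tb {1..n} bb"
  define wx wy where "wx = virtual_value red_dist (bb x)" and "wy = virtual_value red_dist (bb y)"
  have w: "0 < wx" "0 < wy" "7 < wx + wy"
    using bb(2-4) by (auto simp: wx_def wy_def virtual_value_red_dist)
  have "{i \<in> {1..n}. 0 \<le> virtual_value (dists i) (bb i)} = {1..n}"
    using sum_virtual_value[OF bb(1), of "{_}"] w by (auto simp: wx_def wy_def green_val_def)
  then have "?W \<in> I" "?W \<subseteq> {1..n}"
    "(\<Sum>i\<in>insert x (insert y C). virtual_value (dists i) (bb i)) \<le> (\<Sum>i\<in>?W. virtual_value (dists i) (bb i))"
    using myer_winners_optimal[OF tb_choice finite_indep empty_indep, where F = dists and S = "{1..n}" and b = bb]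
      indep_xyC indep_subset by auto
  then show ?thesis
    using optimum_contains_red[OF _ _ w] sum_virtual_value[OF bb(1)] indep_subset[OF indep_xyC]
    unfolding wx_def wy_def by auto
qed

lemma revenue_with_red_le: "myer_rev I dists tb {1..n} bids \<le> 7 * real (card C) + 6"
proof -
  let ?pay = "myer_payment I dists tb {1..n} bids" and ?W = "myer_winners I dists tb {1..n} bids"
  have bids_green: "\<forall>i\<in>green. bids i = green_val i" by (simp add: bids_def)
  have bids_red: "bids x = 8" "bids y = 8" by (auto simp: bids_def green_def)
  have partition: "{1..n} = green \<union> {x, y}" "green \<inter> {x, y} = {}"
    using red_in_range by (auto simp: green_def)
  have "(\<Sum>i\<in>green. ?pay i) = (\<Sum>i\<in>green. if i \<in> ?W then green_val i else 0)"
    using bids_green by (intro sum.cong refl) (simp add: myer_payment_return green_dists)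
  also have "\<dots> = 7 * card (green \<inter> ?W \<inter> heavy)"
    by (simp add: sum.inter_restrict[symmetric] sum_green_val finite_green)
  also have "\<dots> \<le> 7 * card C"
  proof -
    have "card (green \<inter> ?W \<inter> heavy) \<le> card (?W \<inter> heavy)"
      using finite_heavy by (intro card_mono) auto
    also have "\<dots> \<le> card C"
      using red_bidders_win[OF bids_green] bids_red myer_winners_optimal(1)[OF tb_choice finite_indep empty_indep]
      by (intro card_heavy_le_if_red) auto
    finally show ?thesis by simp
  qed
  finally have green_pay: "(\<Sum>i\<in>green. ?pay i) \<le> 7 * card C" .
  have red_pay: "?pay i \<le> 3" if "i = x \<or> i = y" for i
  proof (rule myer_payment_le)
    show "dist_support (dists i) \<subseteq> {0..}" "3 \<in> dist_support (dists i)"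
      using that dist_support_red_dist dist_support_red_dist_nonneg red_dists by auto
    have "\<forall>j\<in>green. (bids(i := 3)) j = green_val j" using that bids_green by (auto simp: green_def)
    then show "i \<in> myer_winners I dists tb {1..n} (bids(i := 3))"
      using that red_bidders_win[of "bids(i := 3)"] bids_red x_neq_y by auto
  qed
  have "(\<Sum>i\<in>{x, y}. ?pay i) \<le> 6" using red_pay[of x] red_pay[of y] x_neq_y by simp
  moreover have "sum pay {1..n} = sum pay green + sum pay {x, y}" for pay :: "nat \<Rightarrow> real"
    unfolding partition(1) by (rule sum.union_disjoint[OF finite_green _ partition(2)]) simp
  ultimately show ?thesis using green_pay unfolding myer_rev_def by simp
qed

lemma revenue_green_only: "myer_rev I dists tb green (restrict green_val green) = 7 * real (card heavy)"
proof -
  let ?bids = "restrict green_val green" and ?W = "myer_winners I dists tb green (restrict green_val green)"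
  have vv: "virtual_value (dists i) (?bids i) = green_val i" if "i \<in> green" for i
    using that by (simp add: green_dists virtual_value_return green_val_def)
  then have "{i \<in> green. 0 \<le> virtual_value (dists i) (?bids i)} = green"
    by (auto simp: green_val_def)
  then have W: "?W \<subseteq> green"
    "(\<Sum>i\<in>heavy. virtual_value (dists i) (?bids i)) \<le> (\<Sum>i\<in>?W. virtual_value (dists i) (?bids i))"
    using myer_winners_optimal[OF tb_choice finite_indep empty_indep, where F = dists and S = green and b = ?bids]
      indep_bC heavy_subset_green unfolding heavy_def by auto
  have "7 * card heavy \<le> 7 * card (?W \<inter> heavy)"
    using W vv heavy_subset_green finite_subset[OF W(1) finite_green]
    by (simp add: subset_iff sum_green_val finite_heavy cong: sum.cong)
  then have heavy_wins: "?W \<inter> heavy = heavy" using finite_heavy by (intro card_seteq) auto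
  have "myer_rev I dists tb green ?bids = (\<Sum>i\<in>green. if i \<in> ?W then green_val i else 0)"
    unfolding myer_rev_def by (intro sum.cong refl) (simp add: myer_payment_return green_dists)
  also have "\<dots> = 7 * real (card (green \<inter> ?W \<inter> heavy))"
    by (simp add: sum.inter_restrict[symmetric] sum_green_val finite_green)
  also have "green \<inter> ?W \<inter> heavy = heavy" using heavy_wins heavy_subset_green by auto
  finally show ?thesis .
qed

lemma expected_revenue_with_red:
  "exp_rev_all n I dists tb green (\<lambda>_. 8) = ennreal (myer_rev I dists tb {1..n} bids)"
proof -
  have "(\<lambda>i. if i \<in> green then restrict green_val green i else 8) = bids" by (auto simp: bids_def)
  then show ?thesis
    unfolding exp_rev_all_def by (simp add: nn_integral_PiM_return[OF finite_green green_dists])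
qed

lemma expected_revenue_green:
  "exp_rev_green I dists tb green = ennreal (myer_rev I dists tb green (restrict green_val green))"
  unfolding exp_rev_green_def by (simp add: nn_integral_PiM_return[OF finite_green green_dists])

end

theorem mainTheorem2:
  fixes n :: nat and I :: "nat set set" and tb :: "nat set set \<Rightarrow> nat set"
  assumes "downward_closed {1..n} I"
    and "\<not> is_matroid {1..n} I"
    and "\<forall>X. X \<noteq> {} \<longrightarrow> tb X \<in> X"
  shows "\<exists>F G R bR.
           (\<forall>i\<in>{1..n}. valid_dist (F i)) \<and>
           G \<union> R = {1..n} \<and> G \<inter> R = {} \<and> G \<noteq> {} \<and>
           (\<forall>i\<in>R. bR i \<in> dist_support (F i)) \<and>
           exp_rev_all n I F tb G bR < exp_rev_green I F tb G"
proof -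
  obtain C b x y where "exchange_obstruction n I tb C b x y"
    by (rule non_matroid_obstruction[OF assms(1) finite_atLeastAtMost assms(2)], rule that,
        rule exchange_obstruction.intro; (assumption | rule assms(1,3)))
  then interpret exchange_obstruction n I tb C b x y .
  have "exp_rev_all n I dists tb green (\<lambda>_. 8) = ennreal (myer_rev I dists tb {1..n} bids)"
    by (rule expected_revenue_with_red)
  also have "\<dots> < ennreal (myer_rev I dists tb green (restrict green_val green))"
    using revenue_with_red_le revenue_green_only card_heavy by (intro ennreal_lessI) auto
  also have "\<dots> = exp_rev_green I dists tb green"
    by (rule expected_revenue_green[symmetric])
  finally have "exp_rev_all n I dists tb green (\<lambda>_. 8) < exp_rev_green I dists tb green" .
  moreover have "\<forall>i\<in>{1..n}. valid_dist (dists i)"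
    by (simp add: dists_def valid_dist_red_dist valid_dist_return green_val_def)
  moreover have "green \<union> {x, y} = {1..n}" "green \<inter> {x, y} = {}" "green \<noteq> {}"
    using red_in_range heavy_subset_green unfolding green_def heavy_def by auto
  moreover have "\<forall>i\<in>{x, y}. 8 \<in> dist_support (dists i)" using dist_support_red_dist red_dists by auto
  ultimately show ?thesis
    by (intro exI[of _ dists] exI[of _ green] exI[of _ "{x, y}"] exI[of _ "\<lambda>_. 8"]) simp
qed

end
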